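(* Let $\mathbf A$ be a finite relational structure that has a $(k+1)$-ary near-unanimity polymorphism for some $k\ge 2$. Then $\mathrm{CSP}(\mathbf A)$ and $\exists\mathrm{CSP}(\mathbf A)$ are sublinear-query testable with one-sided error.
   Context: A $(k+1)$-ary near-unanimity operation $n$ on $A$ satisfies $n(b,a,\dots,a)=n(a,b,a,\dots,a)=\dots=n(a,\dots,a,b)=a$ for all $a,b$; polymorphism of $\mathbf A$ means it preserves every relation of $\mathbf A$ (coordinatewise application to tuples of the relation stays in the relation). $\mathrm{CSP}(\mathbf A)$: instances $(V,\mathcal C,w)$ with constraints from relations of $\mathbf A$ and weights $w:V\to[0,1]$ summing to 1. $\exists\mathrm{CSP}(\mathbf A)$: instances $(V,V^\exists,\mathcal C,w)$ also allowing existentially quantified variables $V^\exists$ in constraints, weights on free variables $V$; $f:V\to A$ is satisfying iff it extends to a satisfying assignment of all variables. $f$ is $\epsilon$-far if its weighted distance to every satisfying assignment exceeds $\epsilon$. An $\epsilon$-tester gets instance and $\epsilon$, queries $f$, accepts satisfying $f$ with probability $\ge2/3$ and rejects $\epsilon$-far $f$ with probability $\ge 2/3$; one-sided error means satisfying $f$ are always accepted. Sublinear-query testable: for every $\epsilon\in(0,1)$ there is an $\epsilon$-tester making $o(n)$ queries, $n=|V|$. *)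

theory Defs
  imports "HOL-Probability.Probability" "HOL-Library.Landau_Symbols"
begin

definition rel_structure :: "(nat \<times> 'a list set) set \<Rightarrow> bool" where
  "rel_structure Rels \<longleftrightarrow> finite Rels \<and> (\<forall>(m, R) \<in> Rels. \<forall>t \<in> R. length t = m)"

text \<open>A (k+1)-ary operation is a function on argument lists of length k+1.\<close>

definition near_unanimity :: "nat \<Rightarrow> ('a list \<Rightarrow> 'a) \<Rightarrow> bool" where
  "near_unanimity k nu \<longleftrightarrow>
     (\<forall>a b i. i \<le> k \<longrightarrow> nu ((replicate (Suc k) a)[i := b]) = a)"

definition polymorphism :: "nat \<Rightarrow> ('a list \<Rightarrow> 'a) \<Rightarrow> (nat \<times> 'a list set) set \<Rightarrow> bool" where
  "polymorphism k nu Rels \<longleftrightarrow>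
     (\<forall>(m, R) \<in> Rels. \<forall>ts. length ts = Suc k \<and> set ts \<subseteq> R \<longrightarrow>
        map (\<lambda>j. nu (map (\<lambda>t. t ! j) ts)) [0..<m] \<in> R)"

text \<open>An instance of ExCSP(A): free variables V, existentially quantified variables Vex,
  constraints C (pairs of a scope and a relation of A), weights w on V.\<close>

definition ecsp_instance ::
  "(nat \<times> 'a list set) set \<Rightarrow> 'v set \<Rightarrow> 'v set \<Rightarrow> ('v list \<times> 'a list set) set \<Rightarrow> ('v \<Rightarrow> real) \<Rightarrow> bool" where
  "ecsp_instance Rels V Vex C w \<longleftrightarrow>
     finite V \<and> finite Vex \<and> V \<inter> Vex = {} \<and> finite C \<and>
     (\<forall>(s, R) \<in> C. (length s, R) \<in> Rels \<and> set s \<subseteq> V \<union> Vex) \<and>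
     (\<forall>v \<in> V. 0 \<le> w v \<and> w v \<le> 1) \<and> (\<Sum>v\<in>V. w v) = 1"

definition csp_instance ::
  "(nat \<times> 'a list set) set \<Rightarrow> 'v set \<Rightarrow> ('v list \<times> 'a list set) set \<Rightarrow> ('v \<Rightarrow> real) \<Rightarrow> bool" where
  "csp_instance Rels V C w \<longleftrightarrow> ecsp_instance Rels V {} C w"

definition satisfying :: "'v set \<Rightarrow> ('v list \<times> 'a list set) set \<Rightarrow> ('v \<Rightarrow> 'a) \<Rightarrow> bool" where
  "satisfying V C f \<longleftrightarrow> (\<exists>g. (\<forall>v \<in> V. g v = f v) \<and> (\<forall>(s, R) \<in> C. map g s \<in> R))"

definition wdist :: "'v set \<Rightarrow> ('v \<Rightarrow> real) \<Rightarrow> ('v \<Rightarrow> 'a) \<Rightarrow> ('v \<Rightarrow> 'a) \<Rightarrow> real" where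
  "wdist V w f g = (\<Sum>v \<in> {v \<in> V. f v \<noteq> g v}. w v)"

definition eps_far ::
  "'v set \<Rightarrow> ('v list \<times> 'a list set) set \<Rightarrow> ('v \<Rightarrow> real) \<Rightarrow> real \<Rightarrow> ('v \<Rightarrow> 'a) \<Rightarrow> bool" where
  "eps_far V C w eps f \<longleftrightarrow> (\<forall>g. satisfying V C g \<longrightarrow> wdist V w f g > eps)"

text \<open>A deterministic adaptive query algorithm is a decision tree: it either halts with
  a verdict (True = accept) or queries the value of a variable and continues depending
  on the answer. A randomized algorithm is a probability distribution over such trees.\<close>

datatype ('v, 'a) qtree = Leaf bool | Query 'v "'a \<Rightarrow> ('v, 'a) qtree"

primrec accepts :: "('v, 'a) qtree \<Rightarrow> ('v \<Rightarrow> 'a) \<Rightarrow> bool" where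
  "accepts (Leaf b) f = b"
| "accepts (Query v t) f = accepts (t (f v)) f"

primrec num_queries :: "('v, 'a) qtree \<Rightarrow> ('v \<Rightarrow> 'a) \<Rightarrow> nat" where
  "num_queries (Leaf b) f = 0"
| "num_queries (Query v t) f = Suc (num_queries (t (f v)) f)"

definition one_sided_tester ::
  "'v set \<Rightarrow> ('v list \<times> 'a list set) set \<Rightarrow> ('v \<Rightarrow> real) \<Rightarrow> real \<Rightarrow> real \<Rightarrow> ('v, 'a) qtree pmf \<Rightarrow> bool" where
  "one_sided_tester V C w eps q D \<longleftrightarrow>
     (\<forall>T \<in> set_pmf D. \<forall>f. real (num_queries T f) \<le> q) \<and>
     (\<forall>f. satisfying V C f \<longrightarrow> (\<forall>T \<in> set_pmf D. accepts T f)) \<and>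
     (\<forall>f. eps_far V C w eps f \<longrightarrow> measure_pmf.prob D {T. \<not> accepts T f} \<ge> 2/3)"

definition ecsp_sublinear_testable_1s ::
  "'v itself \<Rightarrow> (nat \<times> 'a list set) set \<Rightarrow> bool" where
  "ecsp_sublinear_testable_1s _ Rels \<longleftrightarrow>
     (\<forall>eps. 0 < eps \<and> eps < 1 \<longrightarrow>
        (\<exists>q :: nat \<Rightarrow> real. q \<in> o[at_top](\<lambda>n. real n) \<and>
           (\<forall>(V :: 'v set) Vex C w. ecsp_instance Rels V Vex C w \<longrightarrow>
              (\<exists>D. one_sided_tester V C w eps (q (card V)) D))))"

definition csp_sublinear_testable_1s ::
  "'v itself \<Rightarrow> (nat \<times> 'a list set) set \<Rightarrow> bool" where
  "csp_sublinear_testable_1s _ Rels \<longleftrightarrow>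
     (\<forall>eps. 0 < eps \<and> eps < 1 \<longrightarrow>
        (\<exists>q :: nat \<Rightarrow> real. q \<in> o[at_top](\<lambda>n. real n) \<and>
           (\<forall>(V :: 'v set) C w. csp_instance Rels V C w \<longrightarrow>
              (\<exists>D. one_sided_tester V C w eps (q (card V)) D))))"

end

theory Submission
  imports Defs
begin

text \<open>By the Baker--Pixley theorem a near-unanimity polymorphism of arity $k+1$ makes
  extendability local: a partial assignment extends to a solution as soon as its restriction to
  every set of at most $k$ variables does. Hence if $f$ is $\varepsilon$-far from satisfying, every
  set of variables meeting all local obstructions has weight $> \varepsilon$. The tester queries all
  variables of weight $\ge 1/\sqrt n$ and each lighter variable independently with probability
  $\rho \approx n^{-1/(2k)}$, and rejects iff the restriction of $f$ to the sample does not extend.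
  It never rejects a satisfying $f$; for a far $f$ there are many obstructions with disjoint light
  parts, so one of them is sampled completely with probability $\ge 5/6$, while Markov's inequality
  keeps the sample within $O(n^{1-1/(2k)}) = o(n)$ queries with probability $\ge 5/6$.\<close>

section \<open>Query trees and local extendability\<close>

primrec query_all :: "'v list \<Rightarrow> (('v \<Rightarrow> 'a) \<Rightarrow> bool) \<Rightarrow> ('v, 'a) qtree" where
  "query_all [] F = Leaf (F (\<lambda>_. undefined))"
| "query_all (x # xs) F = Query x (\<lambda>a. query_all xs (\<lambda>h. F (h(x := a))))"

lemma accepts_query_all:
  "accepts (query_all xs F) f = F (\<lambda>v. if v \<in> set xs then f v else undefined)"
proof (induction xs arbitrary: F)
  case (Cons x xs)
  have "(\<lambda>v. if v \<in> set xs then f v else undefined)(x := f x) =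
        (\<lambda>v. if v \<in> set (x # xs) then f v else undefined)"
    by (auto simp: fun_eq_iff)
  with Cons show ?case by simp
qed simp

lemma num_queries_query_all: "num_queries (query_all xs F) f = length xs"
  by (induction xs arbitrary: F) auto

definition extendable :: "('v list \<times> 'a list set) set \<Rightarrow> 'v set \<Rightarrow> ('v \<Rightarrow> 'a) \<Rightarrow> bool" where
  "extendable C X f \<longleftrightarrow> (\<exists>g. (\<forall>v\<in>X. g v = f v) \<and> (\<forall>(s, R)\<in>C. map g s \<in> R))"

lemma satisfying_iff_extendable: "satisfying V C f \<longleftrightarrow> extendable C V f"
  unfolding satisfying_def extendable_def ..

lemma extendable_subset: "extendable C X f \<Longrightarrow> Y \<subseteq> X \<Longrightarrow> extendable C Y f"
  unfolding extendable_def by blast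

lemma extendable_cong: "(\<And>v. v \<in> X \<Longrightarrow> h v = f v) \<Longrightarrow> extendable C X h = extendable C X f"
  unfolding extendable_def by auto

lemma near_unanimity_apply:
  assumes nu: "near_unanimity k nu" and j: "j \<le> k"
    and x: "\<And>i. i \<le> k \<Longrightarrow> i \<noteq> j \<Longrightarrow> x i = a"
  shows "nu (map x [0..<Suc k]) = a"
proof -
  have "map x [0..<Suc k] = (replicate (Suc k) a)[j := x j]"
    using x j by (intro nth_equalityI) (auto simp: nth_list_update simp del: upt_Suc replicate_Suc)
  then show ?thesis using nu j unfolding near_unanimity_def by simp
qed

lemma polymorphismD:
  assumes "polymorphism k nu Rels" "(m, R) \<in> Rels" "length ts = Suc k" "set ts \<subseteq> R"
  shows "map (\<lambda>j. nu (map (\<lambda>t. t ! j) ts)) [0..<m] \<in> R"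
  using assms unfolding polymorphism_def by auto

lemma polymorphism_combine_solutions:
  assumes pol: "polymorphism k nu Rels" and C: "\<forall>(s, R)\<in>C. (length s, R) \<in> Rels"
    and G: "\<And>i. i \<le> k \<Longrightarrow> \<forall>(s, R)\<in>C. map (G i) s \<in> R"
  shows "\<forall>(s, R)\<in>C. map (\<lambda>v. nu (map (\<lambda>i. G i v) [0..<Suc k])) s \<in> R"
proof clarify
  fix s R assume sR: "(s, R) \<in> C"
  define ts where "ts = map (\<lambda>i. map (G i) s) [0..<Suc k]"
  have "set ts \<subseteq> R"
  proof
    fix t assume "t \<in> set ts"
    then obtain i where "i < Suc k" "t = map (G i) s" unfolding ts_def by (auto simp del: upt_Suc)
    then show "t \<in> R" using G[of i] sR by auto
  qed
  moreover have "(length s, R) \<in> Rels" using C sR by blast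
  ultimately have "map (\<lambda>j. nu (map (\<lambda>t. t ! j) ts)) [0..<length s] \<in> R"
    by (intro polymorphismD[OF pol]) (simp_all add: ts_def)
  also have "map (\<lambda>j. nu (map (\<lambda>t. t ! j) ts)) [0..<length s] =
             map (\<lambda>v. nu (map (\<lambda>i. G i v) [0..<Suc k])) s"
    by (rule nth_equalityI) (simp_all add: ts_def o_def del: upt_Suc)
  finally show "map (\<lambda>v. nu (map (\<lambda>i. G i v) [0..<Suc k])) s \<in> R" .
qed

text \<open>Merging $k+1$ solutions pointwise with the near-unanimity polymorphism gives a solution; if
  the $i$-th agrees with $f$ off the point $y_i$ for distinct $y_0, \dots, y_k$, then at every point
  at most one of them disagrees with $f$, so the merge agrees with $f$ everywhere.\<close>

lemma near_unanimity_merge_extensions: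
  assumes nu: "near_unanimity k nu" and pol: "polymorphism k nu Rels"
    and C: "\<forall>(s, R)\<in>C. (length s, R) \<in> Rels"
    and ys: "length ys = Suc k" "distinct ys"
    and G: "\<And>i. i \<le> k \<Longrightarrow> (\<forall>v\<in>X - {ys ! i}. G i v = f v) \<and> (\<forall>(s, R)\<in>C. map (G i) s \<in> R)"
  shows "extendable C X f"
proof -
  define g where "g v = nu (map (\<lambda>i. G i v) [0..<Suc k])" for v
  have "g v = f v" if v: "v \<in> X" for v
  proof -
    obtain j where j: "j \<le> k" "\<And>i. i \<le> k \<Longrightarrow> i \<noteq> j \<Longrightarrow> ys ! i \<noteq> v"
    proof (cases "v \<in> set ys")
      case True
      then obtain j where "j < Suc k" "ys ! j = v" using ys by (auto simp: in_set_conv_nth)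
      with ys show ?thesis by (intro that[of j]) (auto simp: nth_eq_iff_index_eq)
    next
      case False
      with ys show ?thesis by (intro that[of 0]) auto
    qed
    have "G i v = f v" if "i \<le> k" "i \<noteq> j" for i
      using G[OF \<open>i \<le> k\<close>] j(2)[OF that] v by blast
    then show ?thesis unfolding g_def by (rule near_unanimity_apply[OF nu j(1)])
  qed
  moreover have "\<forall>(s, R)\<in>C. map g s \<in> R"
    unfolding g_def using G by (intro polymorphism_combine_solutions[OF pol C]) blast
  ultimately show ?thesis unfolding extendable_def by blast
qed

theorem extendable_if_locally_extendable:
  assumes nu: "near_unanimity k nu" and pol: "polymorphism k nu Rels"
    and C: "\<forall>(s, R)\<in>C. (length s, R) \<in> Rels"
    and "finite X" and local: "\<forall>Y\<subseteq>X. card Y \<le> k \<longrightarrow> extendable C Y f"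
  shows "extendable C X f"
  using \<open>finite X\<close> local
proof (induction "card X" arbitrary: X rule: less_induct)
  case less
  show ?case
  proof (cases "card X \<le> k")
    case True
    then show ?thesis using less.prems by auto
  next
    case False
    obtain xs where xs: "set xs = X" "distinct xs"
      using finite_distinct_list[OF less.prems(1)] by blast
    define ys where "ys = take (Suc k) xs"
    have ys: "length ys = Suc k" "distinct ys" and sys: "set ys \<subseteq> X"
      using False xs distinct_card[of xs] set_take_subset[of "Suc k" xs] unfolding ys_def by auto
    have "\<forall>i\<in>{..k}. extendable C (X - {ys ! i}) f"
    proof
      fix i assume "i \<in> {..k}"
      then have "ys ! i \<in> X" using sys ys by (simp add: subset_iff)
      then have "card (X - {ys ! i}) < card X" by (rule card_Diff1_less[OF less.prems(1)])
      then show "extendable C (X - {ys ! i}) f" using less.prems by (intro less.hyps) auto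
    qed
    then have "\<forall>i\<in>{..k}. \<exists>g. (\<forall>v\<in>X - {ys ! i}. g v = f v) \<and> (\<forall>(s, R)\<in>C. map g s \<in> R)"
      unfolding extendable_def .
    then obtain G where "\<forall>i\<in>{..k}. (\<forall>v\<in>X - {ys ! i}. G i v = f v) \<and> (\<forall>(s, R)\<in>C. map (G i) s \<in> R)"
      by (rule bchoice[THEN exE])
    then show ?thesis by (intro near_unanimity_merge_extensions[OF nu pol C ys, where G = G]) simp
  qed
qed

lemma hitting_set_weight_gt:
  assumes inst: "ecsp_instance Rels V Vex C w"
    and nu: "near_unanimity k nu" and pol: "polymorphism k nu Rels"
    and far: "eps_far V C w eps f" and U: "U \<subseteq> V"
    and hits: "\<And>Y. Y \<subseteq> V \<Longrightarrow> card Y \<le> k \<Longrightarrow> \<not> extendable C Y f \<Longrightarrow> Y \<inter> U \<noteq> {}"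
  shows "eps < sum w U"
proof -
  have fin: "finite V" and C: "\<forall>(s, R)\<in>C. (length s, R) \<in> Rels" and w: "\<forall>v\<in>V. 0 \<le> w v"
    using inst unfolding ecsp_instance_def by auto
  have "extendable C Y f" if "Y \<subseteq> V - U" "card Y \<le> k" for Y
    using hits[of Y] that by blast
  then have "extendable C (V - U) f"
    using fin by (intro extendable_if_locally_extendable[OF nu pol C]) auto
  then obtain g where agree: "\<forall>v\<in>V - U. g v = f v" and sol: "\<forall>(s, R)\<in>C. map g s \<in> R"
    unfolding extendable_def by blast
  have "satisfying V C g" unfolding satisfying_def using sol by blast
  then have "eps < wdist V w f g" using far unfolding eps_far_def by blast
  also have "wdist V w f g \<le> sum w U"
  proof -
    have "{v\<in>V. f v \<noteq> g v} \<subseteq> U" using agree by force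
    then show ?thesis unfolding wdist_def using w U by (intro sum_mono2 finite_subset[OF U fin]) auto
  qed
  finally show ?thesis .
qed

lemma disjoint_subfamily_hitting_all:
  assumes "finite B" "{} \<notin> B"
  shows "\<exists>M\<subseteq>B. disjoint M \<and> (\<forall>Y\<in>B. Y \<inter> \<Union>M \<noteq> {})"
  using assms
proof (induction B rule: finite_induct)
  case (insert Y B)
  then obtain M where M: "M \<subseteq> B" "disjoint M" "\<forall>Y'\<in>B. Y' \<inter> \<Union>M \<noteq> {}" by auto
  show ?case
  proof (cases "Y \<inter> \<Union>M = {}")
    case True
    have "disjoint (insert Y M)" using M(2) True by (auto simp: pairwise_insert disjnt_def)
    moreover have "Y \<noteq> {}" using insert.prems by blast
    then have "\<forall>Y'\<in>insert Y B. Y' \<inter> \<Union>(insert Y M) \<noteq> {}" using M(3) by auto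
    ultimately show ?thesis using M(1) by (intro exI[of _ "insert Y M"]) auto
  next
    case False
    then show ?thesis using M by (intro exI[of _ M]) auto
  qed
qed simp

section \<open>Probabilistic estimates\<close>

lemma measure_pair_pmf_Times:
  "measure_pmf.prob (pair_pmf M N) (A \<times> B) = measure_pmf.prob M A * measure_pmf.prob N B"
proof -
  have "measure_pmf.prob (pair_pmf M N) (A \<times> B) =
        measure_pmf.prob (pair_pmf M N) (A \<times> B \<inter> set_pmf (pair_pmf M N))"
    by (rule measure_Int_set_pmf[symmetric])
  also have "A \<times> B \<inter> set_pmf (pair_pmf M N) = (A \<inter> set_pmf M) \<times> (B \<inter> set_pmf N)"
    by auto
  also have "measure_pmf.prob (pair_pmf M N) \<dots> =
             measure_pmf.prob M (A \<inter> set_pmf M) * measure_pmf.prob N (B \<inter> set_pmf N)"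
    by (rule measure_pmf_prob_product) (auto intro: countable_subset[OF _ countable_set_pmf])
  finally show ?thesis by (simp add: measure_Int_set_pmf)
qed

lemma measure_Pi_bernoulli_not_all:
  fixes \<rho> :: real
  assumes "0 \<le> \<rho>" "\<rho> \<le> 1" "finite Z"
  shows "measure_pmf.prob (Pi_pmf Z False (\<lambda>_. bernoulli_pmf \<rho>)) {c. \<not> (\<forall>v\<in>Z. c v)} = 1 - \<rho> ^ card Z"
proof -
  let ?P = "Pi_pmf Z False (\<lambda>_. bernoulli_pmf \<rho>)"
  have "{c. \<not> (\<forall>v\<in>Z. c v)} = UNIV - Pi Z (\<lambda>_. {True})" by (auto simp: Pi_def)
  then have "measure_pmf.prob ?P {c. \<not> (\<forall>v\<in>Z. c v)} = 1 - measure_pmf.prob ?P (Pi Z (\<lambda>_. {True}))"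
    using measure_pmf.prob_compl[of "Pi Z (\<lambda>_. {True})" ?P] by simp
  also have "measure_pmf.prob ?P (Pi Z (\<lambda>_. {True})) = (\<Prod>v\<in>Z. measure_pmf.prob (bernoulli_pmf \<rho>) {True})"
    using assms by (intro measure_Pi_pmf_Pi) auto
  also have "\<dots> = \<rho> ^ card Z" using assms by (simp add: measure_pmf_single)
  finally show ?thesis .
qed

lemma measure_Pi_bernoulli_no_block_all:
  fixes \<rho> :: real
  assumes "0 \<le> \<rho>" "\<rho> \<le> 1" and "finite Ms" "finite A" "disjoint Ms" "\<Union>Ms \<subseteq> A"
  shows "measure_pmf.prob (Pi_pmf A False (\<lambda>_. bernoulli_pmf \<rho>)) {c. \<forall>Z\<in>Ms. \<not> (\<forall>v\<in>Z. c v)}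
           = (\<Prod>Z\<in>Ms. 1 - \<rho> ^ card Z)"
  using assms(3-)
proof (induction Ms arbitrary: A rule: finite_induct)
  case (insert Z Ms)
  let ?P = "\<lambda>B. Pi_pmf B False (\<lambda>_. bernoulli_pmf \<rho>)"
  have ZA: "Z \<subseteq> A" and finZ: "finite Z" using insert.prems finite_subset by auto
  have dis: "Z' \<inter> Z = {}" if "Z' \<in> Ms" for Z'
    using insert.prems(2) insert.hyps(2) that unfolding pairwise_def disjnt_def by (metis insertCI)
  define merge where "merge = (\<lambda>(f, g) x. if x \<in> Z then f x else (g x :: bool))"
  have "?P A = ?P (Z \<union> (A - Z))" using ZA by (simp add: Un_absorb1)
  also have "\<dots> = map_pmf merge (pair_pmf (?P Z) (?P (A - Z)))"
    unfolding merge_def using finZ insert.prems(1) by (intro Pi_pmf_union) auto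
  finally have split: "?P A = map_pmf merge (pair_pmf (?P Z) (?P (A - Z)))" .
  have merge_Z: "(\<exists>v\<in>Z. \<not> merge (f, g) v) = (\<exists>v\<in>Z. \<not> f v)" for f g
    by (simp add: merge_def)
  have merge_Ms: "(\<exists>v\<in>Z'. \<not> merge (f, g) v) = (\<exists>v\<in>Z'. \<not> g v)" if "Z' \<in> Ms" for Z' f g
    using dis[OF that] by (auto simp: merge_def)
  have "merge -` {c. \<forall>Z\<in>insert Z Ms. \<not> (\<forall>v\<in>Z. c v)} =
        {(f, g). \<not> (\<forall>v\<in>Z. f v) \<and> (\<forall>Z'\<in>Ms. \<not> (\<forall>v\<in>Z'. g v))}"
    by (rule set_eqI, case_tac x) (simp add: merge_Z merge_Ms cong: ball_cong)
  then have "measure_pmf.prob (?P A) {c. \<forall>Z\<in>insert Z Ms. \<not> (\<forall>v\<in>Z. c v)} =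
      measure_pmf.prob (?P Z) {f. \<not> (\<forall>v\<in>Z. f v)} *
      measure_pmf.prob (?P (A - Z)) {g. \<forall>Z'\<in>Ms. \<not> (\<forall>v\<in>Z'. g v)}"
    unfolding split measure_map_pmf by (simp add: measure_pair_pmf_Times)
  also have "measure_pmf.prob (?P Z) {f. \<not> (\<forall>v\<in>Z. f v)} = 1 - \<rho> ^ card Z"
    using assms(1,2) finZ by (rule measure_Pi_bernoulli_not_all)
  also have "measure_pmf.prob (?P (A - Z)) {g. \<forall>Z'\<in>Ms. \<not> (\<forall>v\<in>Z'. g v)} = (\<Prod>Z\<in>Ms. 1 - \<rho> ^ card Z)"
    using insert.prems dis by (intro insert.IH) (auto simp: pairwise_insert)
  finally show ?case using insert.hyps by simp
qed simp

lemma measure_Pi_bernoulli_card_ge: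
  fixes \<rho> a :: real
  assumes "0 \<le> \<rho>" "\<rho> \<le> 1" "finite L" "0 < a"
  shows "measure_pmf.prob (Pi_pmf L False (\<lambda>_. bernoulli_pmf \<rho>)) {c. a \<le> real (card {v\<in>L. c v})}
           \<le> \<rho> * card L / a"
proof -
  let ?P = "Pi_pmf L False (\<lambda>_. bernoulli_pmf \<rho>)"
  let ?X = "\<lambda>c. \<Sum>v\<in>L. of_bool (c v) :: real"
  have card_eq: "real (card {v\<in>L. c v}) = ?X c" for c
    using assms(3) by (simp add: of_bool_def sum.If_cases Int_def)
  have "finite (set_pmf ?P)" using assms(3) by (auto simp: set_Pi_pmf intro!: finite_PiE_dflt)
  then have int: "integrable ?P f" for f :: "('a \<Rightarrow> bool) \<Rightarrow> real"
    by (rule integrable_measure_pmf_finite)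
  have "measure_pmf.expectation ?P (\<lambda>c. of_bool (c v) :: real) = \<rho>" if "v \<in> L" for v
  proof -
    have "measure_pmf.expectation ?P (\<lambda>c. of_bool (c v) :: real) =
          measure_pmf.expectation (map_pmf (\<lambda>c. c v) ?P) (of_bool :: bool \<Rightarrow> real)"
      by simp
    also have "map_pmf (\<lambda>c. c v) ?P = bernoulli_pmf \<rho>" using assms(3) that by (simp add: Pi_pmf_component)
    finally show ?thesis using assms(1,2) by simp
  qed
  then have "measure_pmf.expectation ?P ?X = \<rho> * card L"
    by (subst Bochner_Integration.integral_sum) (simp_all add: int)
  moreover have "measure_pmf.prob ?P {c \<in> space (measure_pmf ?P). a \<le> ?X c} \<le> measure_pmf.expectation ?P ?X / a"
    by (rule integral_Markov_inequality_measure[OF int _ _ assms(4), where A = UNIV]) (auto intro!: sum_nonneg)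
  ultimately show ?thesis by (simp add: card_eq)
qed

lemma one_minus_power_le:
  fixes x :: real
  assumes "0 \<le> x" "x \<le> 1" "3 \<le> x * real m"
  shows "(1 - x) ^ m \<le> 1/6"
proof -
  have "exp (3::real) = exp 1 ^ 3" using exp_of_nat_mult[of 3 "1::real"] by simp
  moreover have "(2::real) ^ 3 \<le> exp 1 ^ 3" using exp_ge_add_one_self[of 1] by (intro power_mono) auto
  ultimately have exp3: "exp (- 3 :: real) \<le> 1/6" by (simp add: exp_minus field_simps)
  have "(1 - x) ^ m \<le> exp (- x) ^ m"
    using assms exp_ge_add_one_self[of "- x"] by (intro power_mono) auto
  also have "\<dots> = exp (- (x * real m))" using exp_of_nat_mult[of m "- x"] by (simp add: mult.commute)
  also have "\<dots> \<le> exp (- 3)" using assms by simp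
  finally show ?thesis using exp3 by simp
qed

section \<open>The sampling tester\<close>

definition query_set :: "'v set \<Rightarrow> (('v \<Rightarrow> 'a) \<Rightarrow> bool) \<Rightarrow> ('v, 'a) qtree" where
  "query_set X F = query_all (SOME xs. set xs = X \<and> distinct xs) F"

lemma
  assumes "finite X"
  shows accepts_query_set: "accepts (query_set X F) f = F (\<lambda>v. if v \<in> X then f v else undefined)"
    and num_queries_query_set: "num_queries (query_set X F) f = card X"
proof -
  obtain xs where "set xs = X \<and> distinct xs" using finite_distinct_list[OF assms] by blast
  then have xs: "set (SOME xs. set xs = X \<and> distinct xs) = X \<and> distinct (SOME xs. set xs = X \<and> distinct xs)"
    by (rule someI)
  then show "accepts (query_set X F) f = F (\<lambda>v. if v \<in> X then f v else undefined)"
    unfolding query_set_def by (simp add: accepts_query_all)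
  show "num_queries (query_set X F) f = card X"
    using xs distinct_card unfolding query_set_def num_queries_query_all by metis
qed

text \<open>Over budget the test accepts without reading anything; this keeps the error one-sided.\<close>

definition sample_test :: "real \<Rightarrow> ('v list \<times> 'a list set) set \<Rightarrow> 'v set \<Rightarrow> ('v, 'a) qtree" where
  "sample_test q C S = (if real (card S) \<le> q then query_set S (extendable C S) else Leaf True)"

lemma accepts_sample_test:
  assumes "finite S"
  shows "accepts (sample_test q C S) f \<longleftrightarrow> (real (card S) \<le> q \<longrightarrow> extendable C S f)"
proof -
  have "extendable C S (\<lambda>v. if v \<in> S then f v else undefined) = extendable C S f"
    by (rule extendable_cong) simp
  then show ?thesis unfolding sample_test_def by (simp add: accepts_query_set[OF assms])
qed

lemma num_queries_sample_test:
  assumes "finite S" "0 \<le> q"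
  shows "real (num_queries (sample_test q C S) f) \<le> q"
  using assms by (simp add: sample_test_def num_queries_query_set)

lemma prob_sample_too_large:
  fixes \<rho> q :: real and n :: nat
  assumes \<rho>: "0 < \<rho>" "\<rho> \<le> 1" and L: "finite L" "card L \<le> n" "0 < n"
    and q: "real (card H) + 6 * real n * \<rho> \<le> q"
  shows "measure_pmf.prob (Pi_pmf L False (\<lambda>_. bernoulli_pmf \<rho>))
           {c. q < real (card (H \<union> {v\<in>L. c v}))} \<le> 1/6"
proof -
  let ?P = "Pi_pmf L False (\<lambda>_. bernoulli_pmf \<rho>)"
  have "{c. q < real (card (H \<union> {v\<in>L. c v}))} \<subseteq> {c. 6 * real n * \<rho> \<le> real (card {v\<in>L. c v})}"
  proof clarify
    fix c assume "q < real (card (H \<union> {v\<in>L. c v}))"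
    moreover have "card (H \<union> {v\<in>L. c v}) \<le> card H + card {v\<in>L. c v}" by (rule card_Un_le)
    ultimately show "6 * real n * \<rho> \<le> real (card {v\<in>L. c v})" using q by linarith
  qed
  then have "measure_pmf.prob ?P {c. q < real (card (H \<union> {v\<in>L. c v}))} \<le>
             measure_pmf.prob ?P {c. 6 * real n * \<rho> \<le> real (card {v\<in>L. c v})}"
    by (rule measure_pmf.finite_measure_mono) simp
  also have "\<dots> \<le> \<rho> * card L / (6 * real n * \<rho>)"
    using \<rho> L by (intro measure_Pi_bernoulli_card_ge) auto
  also have "\<dots> \<le> 1/6" using \<rho> L by (simp add: field_simps)
  finally show ?thesis .
qed

lemma prob_no_block_sampled:
  fixes \<rho> :: real
  assumes \<rho>: "0 < \<rho>" "\<rho> \<le> 1" and L: "finite L"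
    and Ms: "finite Ms" "disjoint Ms" "\<Union>Ms \<subseteq> L" "\<forall>Z\<in>Ms. card Z \<le> k" "Ms \<noteq> {}"
    and many: "\<rho> = 1 \<or> 3 \<le> \<rho> ^ k * real (card Ms)"
  shows "measure_pmf.prob (Pi_pmf L False (\<lambda>_. bernoulli_pmf \<rho>)) {c. \<forall>Z\<in>Ms. \<not> (\<forall>v\<in>Z. c v)} \<le> 1/6"
proof -
  have "measure_pmf.prob (Pi_pmf L False (\<lambda>_. bernoulli_pmf \<rho>)) {c. \<forall>Z\<in>Ms. \<not> (\<forall>v\<in>Z. c v)}
        = (\<Prod>Z\<in>Ms. 1 - \<rho> ^ card Z)"
    using \<rho> L Ms by (intro measure_Pi_bernoulli_no_block_all) auto
  also have "\<dots> \<le> (\<Prod>Z\<in>Ms. 1 - \<rho> ^ k)"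
  proof (rule prod_mono)
    fix Z assume "Z \<in> Ms"
    then have "\<rho> ^ k \<le> \<rho> ^ card Z" using Ms \<rho> by (intro power_decreasing) auto
    moreover have "\<rho> ^ card Z \<le> 1" using \<rho> by (simp add: power_le_one)
    ultimately show "0 \<le> 1 - \<rho> ^ card Z \<and> 1 - \<rho> ^ card Z \<le> 1 - \<rho> ^ k" by simp
  qed
  also have "\<dots> = (1 - \<rho> ^ k) ^ card Ms" by simp
  also have "\<dots> \<le> 1/6"
    using many
  proof
    assume "\<rho> = 1"
    moreover have "card Ms \<noteq> 0" using Ms by simp
    ultimately show ?thesis by (simp add: zero_power)
  next
    assume "3 \<le> \<rho> ^ k * real (card Ms)"
    then show ?thesis using \<rho> by (intro one_minus_power_le) (auto simp: power_le_one)
  qed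
  finally show ?thesis .
qed

lemma sum_Union_disjoint_le:
  fixes w :: "'a \<Rightarrow> real"
  assumes "finite L" "\<Union>Ms \<subseteq> L" "disjoint Ms" "\<forall>Z\<in>Ms. card Z \<le> k" "\<forall>v\<in>L. w v \<le> \<theta>" "0 \<le> \<theta>"
  shows "sum w (\<Union>Ms) \<le> real (card Ms) * (real k * \<theta>)"
proof -
  have fin: "\<forall>Z\<in>Ms. finite Z" using assms(1,2) finite_subset[OF _ assms(1)] by blast
  have "sum w (\<Union>Ms) = (\<Sum>Z\<in>Ms. sum w Z)"
  proof -
    have "\<forall>Z\<in>Ms. \<forall>Z'\<in>Ms. Z \<noteq> Z' \<longrightarrow> Z \<inter> Z' = {}"
      using assms(3) unfolding pairwise_def disjnt_def by blast
    with fin show ?thesis by (simp add: sum.Union_disjoint)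
  qed
  also have "\<dots> \<le> (\<Sum>Z\<in>Ms. real k * \<theta>)"
  proof (rule sum_mono)
    fix Z assume Z: "Z \<in> Ms"
    have "sum w Z \<le> (\<Sum>v\<in>Z. \<theta>)" using assms(2,5) Z by (intro sum_mono) auto
    also have "\<dots> \<le> real k * \<theta>" using assms(4,6) Z by (simp add: mult_right_mono)
    finally show "sum w Z \<le> real k * \<theta>" .
  qed
  finally show ?thesis by simp
qed

text \<open>An obstruction is a set of at most $k$ variables on which $f$ does not extend. If all
  obstructions meet the light variables $L$, choose greedily obstructions whose light parts are
  pairwise disjoint and hit every obstruction. By Baker--Pixley these light parts carry weight
  $> \varepsilon$, and each has weight $\le k\theta$, so there are more than
  $\varepsilon / (k\theta)$ of them.\<close>

lemma disjoint_light_obstructions: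
  fixes \<theta> eps :: real
  assumes inst: "ecsp_instance Rels V Vex C w"
    and nu: "near_unanimity k nu" and pol: "polymorphism k nu Rels" and far: "eps_far V C w eps f"
    and V: "V = H \<union> L" and light: "\<forall>v\<in>L. w v \<le> \<theta>" and \<theta>: "0 \<le> \<theta>"
    and meet: "\<forall>Y. Y \<subseteq> V \<longrightarrow> card Y \<le> k \<longrightarrow> \<not> extendable C Y f \<longrightarrow> Y \<inter> L \<noteq> {}"
  obtains Ms where "finite Ms" "disjoint Ms" "\<Union>Ms \<subseteq> L" "\<forall>Z\<in>Ms. card Z \<le> k"
    and "eps < real (card Ms) * (real k * \<theta>)"
    and "\<And>Z. Z \<in> Ms \<Longrightarrow> \<exists>Y. Y \<subseteq> V \<and> card Y \<le> k \<and> \<not> extendable C Y f \<and> Z = Y \<inter> L"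
proof -
  define B where "B = {Y. Y \<subseteq> V \<and> card Y \<le> k \<and> \<not> extendable C Y f}"
  have finV: "finite V" using inst unfolding ecsp_instance_def by auto
  have finL: "finite L" using finV V by simp
  have "B \<subseteq> Pow V" unfolding B_def by blast
  then have "finite B" using finV by (simp add: finite_subset)
  moreover have "{} \<notin> (\<lambda>Y. Y \<inter> L) ` B" using meet unfolding B_def by blast
  ultimately obtain Ms where Ms: "Ms \<subseteq> (\<lambda>Y. Y \<inter> L) ` B" "disjoint Ms"
    and "\<forall>T\<in>(\<lambda>Y. Y \<inter> L) ` B. T \<inter> \<Union>Ms \<noteq> {}"
    using disjoint_subfamily_hitting_all[of "(\<lambda>Y. Y \<inter> L) ` B"] by blast
  then have hits: "\<forall>Y\<in>B. Y \<inter> L \<inter> \<Union>Ms \<noteq> {}" by blast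
  have MsL: "\<Union>Ms \<subseteq> L" and MsV: "\<Union>Ms \<subseteq> V" using Ms(1) V by auto
  have "Ms \<subseteq> Pow L" using MsL by blast
  then have finMs: "finite Ms" using finL by (meson finite_Pow_iff finite_subset)
  have cardZ: "card Z \<le> k" if "Z \<in> Ms" for Z
  proof -
    obtain Y where "Y \<in> B" "Z = Y \<inter> L" using Ms(1) \<open>Z \<in> Ms\<close> by blast
    then have "Y \<subseteq> V" "card Y \<le> k" unfolding B_def by auto
    then show ?thesis using \<open>Z = Y \<inter> L\<close> card_mono[OF finite_subset[OF \<open>Y \<subseteq> V\<close> finV], of Z] by simp
  qed
  have "Y \<inter> \<Union>Ms \<noteq> {}" if "Y \<subseteq> V" "card Y \<le> k" "\<not> extendable C Y f" for Y
    using hits that unfolding B_def by blast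
  then have "eps < sum w (\<Union>Ms)" by (rule hitting_set_weight_gt[OF inst nu pol far MsV])
  also have "\<dots> \<le> real (card Ms) * (real k * \<theta>)"
    using finL MsL Ms(2) cardZ light \<theta> by (intro sum_Union_disjoint_le) auto
  finally have weight: "eps < real (card Ms) * (real k * \<theta>)" .
  have "\<exists>Y. Y \<subseteq> V \<and> card Y \<le> k \<and> \<not> extendable C Y f \<and> Z = Y \<inter> L" if "Z \<in> Ms" for Z
    using Ms(1) that unfolding B_def by blast
  with cardZ show ?thesis by (intro that[OF finMs Ms(2) MsL _ weight]) auto
qed

lemma prob_sample_misses_obstructions:
  fixes \<rho> \<theta> eps :: real
  assumes inst: "ecsp_instance Rels V Vex C w"
    and nu: "near_unanimity k nu" and pol: "polymorphism k nu Rels"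
    and far: "eps_far V C w eps f" and eps: "0 < eps"
    and V: "V = H \<union> L" and light: "\<forall>v\<in>L. w v \<le> \<theta>" and \<theta>: "0 \<le> \<theta>"
    and \<rho>: "0 < \<rho>" "\<rho> \<le> 1" and \<rho>k: "\<rho> = 1 \<or> 3 * real k * \<theta> \<le> eps * \<rho> ^ k"
  shows "measure_pmf.prob (Pi_pmf L False (\<lambda>_. bernoulli_pmf \<rho>))
           {c. \<forall>Y. Y \<subseteq> V \<longrightarrow> card Y \<le> k \<longrightarrow> Y \<subseteq> H \<union> {v\<in>L. c v} \<longrightarrow> extendable C Y f} \<le> 1/6"
    (is "measure_pmf.prob ?P ?Miss \<le> _")
proof (cases "\<forall>Y. Y \<subseteq> V \<longrightarrow> card Y \<le> k \<longrightarrow> \<not> extendable C Y f \<longrightarrow> Y \<inter> L \<noteq> {}")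
  case False
  then obtain Y where Y: "Y \<subseteq> V" "card Y \<le> k" "\<not> extendable C Y f" "Y \<subseteq> H" using V by blast
  have "c \<notin> ?Miss" for c
  proof
    assume "c \<in> ?Miss"
    moreover have "Y \<subseteq> H \<union> {v\<in>L. c v}" using Y(4) by blast
    ultimately show False using Y(1-3) by blast
  qed
  then have "?Miss = {}" by blast
  then show ?thesis by (simp only:) simp
next
  case True
  have finL: "finite L" using inst V unfolding ecsp_instance_def by auto
  obtain Ms where Ms: "finite Ms" "disjoint Ms" "\<Union>Ms \<subseteq> L" "\<forall>Z\<in>Ms. card Z \<le> k"
    and weight: "eps < real (card Ms) * (real k * \<theta>)"
    and obstr: "\<And>Z. Z \<in> Ms \<Longrightarrow> \<exists>Y. Y \<subseteq> V \<and> card Y \<le> k \<and> \<not> extendable C Y f \<and> Z = Y \<inter> L"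
    using disjoint_light_obstructions[OF inst nu pol far V light \<theta> True] by blast
  have "?Miss \<subseteq> {c. \<forall>Z\<in>Ms. \<not> (\<forall>v\<in>Z. c v)}"
  proof (intro subsetI CollectI ballI notI)
    fix c Z assume miss: "c \<in> ?Miss" and Z: "Z \<in> Ms" and sampled: "\<forall>v\<in>Z. c v"
    obtain Y where Y: "Y \<subseteq> V" "card Y \<le> k" "\<not> extendable C Y f" "Z = Y \<inter> L" using obstr[OF Z] by blast
    then have "Y \<subseteq> H \<union> {v\<in>L. c v}" using sampled V by blast
    then show False using miss Y by blast
  qed
  then have "measure_pmf.prob ?P ?Miss \<le> measure_pmf.prob ?P {c. \<forall>Z\<in>Ms. \<not> (\<forall>v\<in>Z. c v)}"
    by (rule measure_pmf.finite_measure_mono) simp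
  also have "\<dots> \<le> 1/6"
  proof (rule prob_no_block_sampled[OF \<rho> finL Ms])
    show "Ms \<noteq> {}" using weight eps by auto
    show "\<rho> = 1 \<or> 3 \<le> \<rho> ^ k * real (card Ms)"
      using \<rho>k
    proof (rule disjE)
      assume "3 * real k * \<theta> \<le> eps * \<rho> ^ k"
      from mult_right_mono[OF this, of "real (card Ms)"]
      have "3 * (real (card Ms) * (real k * \<theta>)) \<le> eps * (\<rho> ^ k * real (card Ms))"
        by (simp add: algebra_simps)
      then have "eps * 3 < eps * (\<rho> ^ k * real (card Ms))" using weight by linarith
      then show ?thesis using eps by simp
    qed simp
  qed
  finally show ?thesis .
qed

lemma prob_sample_test_rejects:
  fixes \<rho> \<theta> eps q :: real
  assumes inst: "ecsp_instance Rels V Vex C w"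
    and nu: "near_unanimity k nu" and pol: "polymorphism k nu Rels"
    and far: "eps_far V C w eps f" and eps: "0 < eps"
    and V: "V = H \<union> L" and light: "\<forall>v\<in>L. w v \<le> \<theta>" and \<theta>: "0 \<le> \<theta>"
    and \<rho>: "0 < \<rho>" "\<rho> \<le> 1" and \<rho>k: "\<rho> = 1 \<or> 3 * real k * \<theta> \<le> eps * \<rho> ^ k"
    and q: "real (card H) + 6 * real (card V) * \<rho> \<le> q"
  shows "2/3 \<le> measure_pmf.prob (Pi_pmf L False (\<lambda>_. bernoulli_pmf \<rho>))
                 {c. \<not> accepts (sample_test q C (H \<union> {v\<in>L. c v})) f}"
proof -
  let ?P = "Pi_pmf L False (\<lambda>_. bernoulli_pmf \<rho>)"
  let ?S = "\<lambda>c. H \<union> {v\<in>L. c v}"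
  let ?Big = "{c. q < real (card (?S c))}"
  let ?Miss = "{c. \<forall>Y. Y \<subseteq> V \<longrightarrow> card Y \<le> k \<longrightarrow> Y \<subseteq> ?S c \<longrightarrow> extendable C Y f}"
  have finV: "finite V" and wsum: "sum w V = 1" using inst unfolding ecsp_instance_def by auto
  have finS: "finite (?S c)" for c using finV V by auto
  have "V \<noteq> {}" using wsum by auto
  then have n: "0 < card V" using finV by auto
  have accept: "{c. accepts (sample_test q C (?S c)) f} \<subseteq> ?Big \<union> ?Miss"
  proof (intro subsetI)
    fix c assume "c \<in> {c. accepts (sample_test q C (?S c)) f}"
    then have "real (card (?S c)) \<le> q \<longrightarrow> extendable C (?S c) f"
      by (simp add: accepts_sample_test[OF finS])
    then show "c \<in> ?Big \<union> ?Miss" by (auto intro: extendable_subset)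
  qed
  have "measure_pmf.prob ?P {c. accepts (sample_test q C (?S c)) f} \<le> measure_pmf.prob ?P (?Big \<union> ?Miss)"
    using accept by (rule measure_pmf.finite_measure_mono) simp
  also have "\<dots> \<le> measure_pmf.prob ?P ?Big + measure_pmf.prob ?P ?Miss"
    by (rule measure_Un_le) simp_all
  also have "measure_pmf.prob ?P ?Big \<le> 1/6"
    using \<rho> finV V n q by (intro prob_sample_too_large) (auto intro: card_mono)
  also have "measure_pmf.prob ?P ?Miss \<le> 1/6"
    by (rule prob_sample_misses_obstructions[OF inst nu pol far eps V light \<theta> \<rho> \<rho>k])
  finally have "measure_pmf.prob ?P {c. accepts (sample_test q C (?S c)) f} \<le> 1/3" by simp
  moreover have "{c. \<not> accepts (sample_test q C (?S c)) f} = UNIV - {c. accepts (sample_test q C (?S c)) f}"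
    by blast
  ultimately show ?thesis
    using measure_pmf.prob_compl[of "{c. accepts (sample_test q C (?S c)) f}" ?P] by simp
qed

definition query_bound :: "nat \<Rightarrow> real \<Rightarrow> nat \<Rightarrow> real" where
  "query_bound k eps n =
     sqrt (real n) + 6 * (3 * real k / eps) powr (1 / real k) * real n powr (1 - 1 / (2 * real k))"

lemma query_bound_smallo:
  assumes "1 \<le> k"
  shows "query_bound k eps \<in> o(\<lambda>n. real n)"
proof -
  have real_at_top: "filterlim (\<lambda>n::nat. real n) at_top at_top" by (rule filterlim_real_sequentially)
  have nontriv: "(at_top :: nat filter) \<noteq> bot" by simp
  have "(\<lambda>n::nat. real n powr (1/2)) \<in> o(\<lambda>n. real n powr 1)"
    using powr_smallo_iff[OF real_at_top nontriv, of "1/2" 1] by simp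
  then have sqrt_smallo: "(\<lambda>n::nat. sqrt (real n)) \<in> o(\<lambda>n. real n)"
    by (simp add: powr_half_sqrt)
  have "(\<lambda>n::nat. real n powr (1 - 1 / (2 * real k))) \<in> o(\<lambda>n. real n powr 1)"
    using powr_smallo_iff[OF real_at_top nontriv, of "1 - 1 / (2 * real k)" 1] assms by simp
  then have "(\<lambda>n::nat. 6 * (3 * real k / eps) powr (1 / real k) * real n powr (1 - 1 / (2 * real k)))
               \<in> o(\<lambda>n. real n)"
    by (cases "(3 * real k / eps) powr (1 / real k) = 0") simp_all
  with sqrt_smallo show ?thesis unfolding query_bound_def by (rule sum_in_smallo)
qed

lemma sampling_rate_power:
  assumes "0 < a" "1 \<le> k" "0 < n"
  shows "(a powr (1 / real k) * real n powr (- 1 / (2 * real k))) ^ k = a / sqrt (real n)"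
proof -
  have a: "(a powr (1 / real k)) ^ k = a"
    using assms by (simp add: powr_realpow[symmetric] powr_powr)
  have "(real n powr (- 1 / (2 * real k))) ^ k = real n powr (- (1/2))"
    using assms by (simp add: powr_realpow[symmetric] powr_powr)
  also have "\<dots> = 1 / sqrt (real n)" by (simp add: powr_minus_divide powr_half_sqrt)
  finally show ?thesis unfolding power_mult_distrib a by simp
qed

lemma card_heavy_le:
  fixes w :: "'v \<Rightarrow> real"
  assumes "finite V" "\<forall>v\<in>V. 0 \<le> w v" "sum w V = 1"
  shows "real (card {v\<in>V. \<theta> \<le> w v}) * \<theta> \<le> 1"
proof -
  have "real (card {v\<in>V. \<theta> \<le> w v}) * \<theta> = (\<Sum>v\<in>{v\<in>V. \<theta> \<le> w v}. \<theta>)" by simp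
  also have "\<dots> \<le> sum w {v\<in>V. \<theta> \<le> w v}" by (rule sum_mono) simp
  also have "\<dots> \<le> sum w V" using assms by (intro sum_mono2) auto
  finally show ?thesis using assms by simp
qed

lemma sample_tester_one_sided:
  fixes \<rho> \<theta> eps q :: real
  assumes inst: "ecsp_instance Rels V Vex C w"
    and nu: "near_unanimity k nu" and pol: "polymorphism k nu Rels" and eps: "0 < eps"
    and V: "V = H \<union> L" and light: "\<forall>v\<in>L. w v \<le> \<theta>" and \<theta>: "0 \<le> \<theta>"
    and \<rho>: "0 < \<rho>" "\<rho> \<le> 1" and \<rho>k: "\<rho> = 1 \<or> 3 * real k * \<theta> \<le> eps * \<rho> ^ k"
    and q: "real (card H) + 6 * real (card V) * \<rho> \<le> q" "0 \<le> q"
  shows "one_sided_tester V C w eps q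
           (map_pmf (\<lambda>c. sample_test q C (H \<union> {v\<in>L. c v})) (Pi_pmf L False (\<lambda>_. bernoulli_pmf \<rho>)))"
  unfolding one_sided_tester_def
proof (intro conjI allI impI ballI)
  have finS: "finite (H \<union> {v\<in>L. c v})" for c
    using inst V unfolding ecsp_instance_def by auto
  fix T f assume "T \<in> set_pmf (map_pmf (\<lambda>c. sample_test q C (H \<union> {v\<in>L. c v})) (Pi_pmf L False (\<lambda>_. bernoulli_pmf \<rho>)))"
  then obtain c where T: "T = sample_test q C (H \<union> {v\<in>L. c v})" by auto
  then show "real (num_queries T f) \<le> q" using finS q(2) by (simp add: num_queries_sample_test)
  assume "satisfying V C f"
  then have "extendable C (H \<union> {v\<in>L. c v}) f"
    using V by (auto simp: satisfying_iff_extendable intro: extendable_subset)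
  then show "accepts T f" using T by (simp add: accepts_sample_test[OF finS])
next
  fix f assume "eps_far V C w eps f"
  then show "2/3 \<le> measure_pmf.prob
      (map_pmf (\<lambda>c. sample_test q C (H \<union> {v\<in>L. c v})) (Pi_pmf L False (\<lambda>_. bernoulli_pmf \<rho>)))
      {T. \<not> accepts T f}"
    using prob_sample_test_rejects[OF inst nu pol _ eps V light \<theta> \<rho> \<rho>k q(1)] by simp
qed

text \<open>The rate is chosen so that $\rho^k = 3k\theta/\varepsilon$ for $\theta = 1/\sqrt n$, while the
  expected number $n\rho$ of sampled light variables stays $O(n^{1 - 1/(2k)})$.\<close>

lemma sampling_rate:
  fixes eps :: real
  assumes k: "1 \<le> k" and eps: "0 < eps" and n: "0 < n"
  defines "c0 \<equiv> (3 * real k / eps) powr (1 / real k)"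
  defines "\<rho> \<equiv> min 1 (c0 * real n powr (- 1 / (2 * real k)))"
  shows "0 < \<rho>" "\<rho> \<le> 1" "\<rho> = 1 \<or> 3 * real k * (1 / sqrt (real n)) \<le> eps * \<rho> ^ k"
    and "real n * \<rho> \<le> c0 * real n powr (1 - 1 / (2 * real k))"
proof -
  have c0: "0 < c0" using eps k unfolding c0_def by simp
  show "0 < \<rho>" "\<rho> \<le> 1" using c0 n unfolding \<rho>_def by auto
  show "\<rho> = 1 \<or> 3 * real k * (1 / sqrt (real n)) \<le> eps * \<rho> ^ k"
  proof (cases "\<rho> = 1")
    case False
    then have "\<rho> = c0 * real n powr (- 1 / (2 * real k))" unfolding \<rho>_def by (simp add: min_def split: if_splits)
    then have "\<rho> ^ k = (3 * real k / eps) / sqrt (real n)"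
      unfolding c0_def using sampling_rate_power[of "3 * real k / eps", OF _ k n] eps k by simp
    then show ?thesis using eps by simp
  qed simp
  have "real n * \<rho> \<le> real n * (c0 * real n powr (- 1 / (2 * real k)))"
    unfolding \<rho>_def by (intro mult_left_mono) auto
  also have "\<dots> = c0 * (real n powr 1 * real n powr (- 1 / (2 * real k)))" using n by simp
  also have "\<dots> = c0 * real n powr (1 - 1 / (2 * real k))"
    using powr_add[of "real n" 1 "- 1 / (2 * real k)"] by simp
  finally show "real n * \<rho> \<le> c0 * real n powr (1 - 1 / (2 * real k))" .
qed

lemma ecsp_one_sided_tester:
  fixes eps :: real
  assumes nu: "near_unanimity k nu" and pol: "polymorphism k nu Rels"
    and k: "1 \<le> k" and eps: "0 < eps" and inst: "ecsp_instance Rels V Vex C w"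
  shows "\<exists>D. one_sided_tester V C w eps (query_bound k eps (card V)) D"
proof -
  define n where "n = card V"
  define c0 where "c0 = (3 * real k / eps) powr (1 / real k)"
  define \<rho> where "\<rho> = min 1 (c0 * real n powr (- 1 / (2 * real k)))"
  define \<theta> where "\<theta> = 1 / sqrt (real n)"
  define H where "H = {v\<in>V. \<theta> \<le> w v}"
  have finV: "finite V" and w: "\<forall>v\<in>V. 0 \<le> w v" and wsum: "sum w V = 1"
    using inst unfolding ecsp_instance_def by auto
  have "V \<noteq> {}" using wsum by auto
  then have n: "0 < n" using finV unfolding n_def by auto
  note rate = sampling_rate[OF k eps n, folded c0_def, folded \<rho>_def \<theta>_def]
  have "real (card H) \<le> sqrt (real n)"
    using card_heavy_le[OF finV w wsum, of \<theta>] n unfolding H_def \<theta>_def by (simp add: field_simps)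
  then have "real (card H) + 6 * real (card V) * \<rho> \<le> query_bound k eps n"
    using rate(4) unfolding query_bound_def c0_def n_def by simp
  moreover have "0 \<le> query_bound k eps n" unfolding query_bound_def by simp
  moreover have V: "V = H \<union> (V - H)" and light: "\<forall>v\<in>V - H. w v \<le> \<theta>" and "0 \<le> \<theta>"
    unfolding H_def \<theta>_def by auto
  ultimately have "one_sided_tester V C w eps (query_bound k eps n)
      (map_pmf (\<lambda>c. sample_test (query_bound k eps n) C (H \<union> {v\<in>V - H. c v}))
        (Pi_pmf (V - H) False (\<lambda>_. bernoulli_pmf \<rho>)))"
    by (intro sample_tester_one_sided[OF inst nu pol eps V light _ rate(1-3)])
  then show ?thesis unfolding n_def by blast
qed

theorem mainTheorem12:
  fixes Rels :: "(nat \<times> ('a::finite) list set) set"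
    and nu :: "'a list \<Rightarrow> 'a"
    and k :: nat
  assumes "rel_structure Rels"
    and "k \<ge> 2"
    and "near_unanimity k nu"
    and "polymorphism k nu Rels"
  shows "csp_sublinear_testable_1s TYPE('v) Rels \<and> ecsp_sublinear_testable_1s TYPE('v) Rels"
proof -
  have k: "1 \<le> k" using assms(2) by simp
  have tester: "\<exists>q. q \<in> o(\<lambda>n. real n) \<and>
      (\<forall>(V :: 'v set) Vex C w. ecsp_instance Rels V Vex C w \<longrightarrow> (\<exists>D. one_sided_tester V C w eps (q (card V)) D))"
    if "0 < eps" for eps
    using query_bound_smallo[OF k] ecsp_one_sided_tester[OF assms(3,4) k that] by blast
  then have "ecsp_sublinear_testable_1s TYPE('v) Rels"
    unfolding ecsp_sublinear_testable_1s_def by blast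
  moreover have "csp_sublinear_testable_1s TYPE('v) Rels"
    unfolding csp_sublinear_testable_1s_def csp_instance_def using tester by blast
  ultimately show ?thesis by blast
qed

end
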